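(* Let $\mathbf y_t\in\mathbb{R}^q$ and $\mathbf z_t\in\mathbb{R}^m$, $1\le t\le T$, be observed (mean zero) time series, let $c,k\ge0$ be integers and $h\ge0$. Put $\mathbf x_t=(\mathbf z_t',\dots,\mathbf z_{t-c}')'\in\mathbb{R}^p$, $p=m(c+1)$, and let $\mathcal X_t$ be the $(k+1)\times p$ matrix with rows $\mathbf x_t',\dots,\mathbf x_{t-k}'$. For $\boldsymbol\beta\in\mathbb{R}^p$ and a $q\times(k+1)$ matrix $\boldsymbol\Gamma$ let $\mathbf e_{t+h|t}(\boldsymbol\beta,\boldsymbol\Gamma)=\mathbf y_{t+h}-\boldsymbol\Gamma\mathcal X_t\boldsymbol\beta$ and $$G_2(\boldsymbol\beta,\boldsymbol\Gamma)=\Big|\frac{1}{T-h-c-k}\sum_{t=c+k+1}^{T-h}\mathbf e_{t+h|t}(\boldsymbol\beta,\boldsymbol\Gamma)\mathbf e_{t+h|t}(\boldsymbol\beta,\boldsymbol\Gamma)'\Big|,$$ where $|\cdot|$ denotes the determinant. Let $(\widehat{\boldsymbol\beta},\widehat{\boldsymbol\Gamma})$ minimize $G_2$ and set $$\widehat{\boldsymbol\Sigma}=\frac{1}{T-c-k-h}\sum_{t=c+k+1}^{T-h}(\mathbf y_{t+h}-\widehat{\boldsymbol\Gamma}\mathcal X_t\widehat{\boldsymbol\beta})(\mathbf y_{t+h}-\widehat{\boldsymbol\Gamma}\mathcal X_t\widehat{\boldsymbol\beta})'.$$ Then (whenever the inverses below exist, in particular $|\widehat{\boldsymbol\Sigma}|>0$)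 $$\widehat{\boldsymbol\beta}=\Big[\frac{1}{T-c-k-h}\sum_{t=c+k+1}^{T-h}\mathcal X_t'\widehat{\boldsymbol\Gamma}'\widehat{\boldsymbol\Sigma}^{-1}\widehat{\boldsymbol\Gamma}\mathcal X_t\Big]^{-1}\Big[\frac{1}{T-c-k-h}\sum_{t=c+k+1}^{T-h}\mathcal X_t'\widehat{\boldsymbol\Gamma}'\widehat{\boldsymbol\Sigma}^{-1}\mathbf y_{t+h}\Big]$$ and $\widehat{\boldsymbol\Gamma}=\mathcal G(\widehat{\boldsymbol\beta})$, where $\mathcal G(\boldsymbol\beta)=\mathbf Y'\mathbf F(\boldsymbol\beta)(\mathbf F(\boldsymbol\beta)'\mathbf F(\boldsymbol\beta))^{-1}$.
   Context: $\mathbf f_t(\boldsymbol\beta)=\mathcal X_t\boldsymbol\beta\in\mathbb{R}^{k+1}$. $\mathbf F(\boldsymbol\beta)$ is the $(T-h-c-k)\times(k+1)$ matrix with rows $\mathbf f_t(\boldsymbol\beta)'$, $t=c+k+1,\dots,T-h$, and $\mathbf Y$ is the $(T-h-c-k)\times q$ matrix with corresponding rows $\mathbf y_{t+h}'$; $\mathcal G(\boldsymbol\beta)$ is the least squares coefficient matrix of regressing $\mathbf y_{t+h}$ on $\mathbf f_t(\boldsymbol\beta)$. *)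

theory Defs
  imports "Jordan_Normal_Form.Determinant"
begin

(* Inverse of a square matrix (meaningful when invertible_mat A). *)
definition minv :: "real mat \<Rightarrow> real mat" where
  "minv A = (THE B. inverts_mat A B \<and> inverts_mat B A)"

definition mat_sum :: "nat \<Rightarrow> nat \<Rightarrow> (nat \<Rightarrow> real mat) \<Rightarrow> nat set \<Rightarrow> real mat" where
  "mat_sum n n' f S = mat n n' (\<lambda>(i,j). \<Sum>t\<in>S. f t $$ (i,j))"

definition outer :: "real vec \<Rightarrow> real mat" where
  "outer v = mat (dim_vec v) (dim_vec v) (\<lambda>(i,j). v $ i * v $ j)"

(* x_t = (z_t', ..., z_{t-c}')' in R^{m(c+1)}; entry j*m+i is the i-th entry of z_{t-j} *)
definition xvec :: "(nat \<Rightarrow> real vec) \<Rightarrow> nat \<Rightarrow> nat \<Rightarrow> nat \<Rightarrow> real vec" where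
  "xvec z m c t = vec (m * (c + 1)) (\<lambda>l. z (t - l div m) $ (l mod m))"

definition Xmat :: "(nat \<Rightarrow> real vec) \<Rightarrow> nat \<Rightarrow> nat \<Rightarrow> nat \<Rightarrow> nat \<Rightarrow> real mat" where
  "Xmat z m c k t = mat (k + 1) (m * (c + 1)) (\<lambda>(r,l). xvec z m c (t - r) $ l)"

definition window :: "nat \<Rightarrow> nat \<Rightarrow> nat \<Rightarrow> nat \<Rightarrow> nat set" where
  "window c k h T = {c + k + 1 .. T - h}"

definition nobs :: "nat \<Rightarrow> nat \<Rightarrow> nat \<Rightarrow> nat \<Rightarrow> nat" where
  "nobs c k h T = T - h - c - k"

definition err :: "(nat \<Rightarrow> real vec) \<Rightarrow> (nat \<Rightarrow> real vec) \<Rightarrow> nat \<Rightarrow> nat \<Rightarrow> nat \<Rightarrow> nat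
                    \<Rightarrow> real vec \<Rightarrow> real mat \<Rightarrow> nat \<Rightarrow> real vec" where
  "err y z m c k h \<beta> \<Gamma> t = y (t + h) - \<Gamma> *\<^sub>v (Xmat z m c k t *\<^sub>v \<beta>)"

definition resid_cov :: "(nat \<Rightarrow> real vec) \<Rightarrow> (nat \<Rightarrow> real vec) \<Rightarrow> nat \<Rightarrow> nat \<Rightarrow> nat \<Rightarrow> nat \<Rightarrow> nat \<Rightarrow> nat
                    \<Rightarrow> real vec \<Rightarrow> real mat \<Rightarrow> real mat" where
  "resid_cov y z q m c k h T \<beta> \<Gamma> =
     (1 / real (nobs c k h T)) \<cdot>\<^sub>m
       mat_sum q q (\<lambda>t. outer (err y z m c k h \<beta> \<Gamma> t)) (window c k h T)"

definition G2 :: "(nat \<Rightarrow> real vec) \<Rightarrow> (nat \<Rightarrow> real vec) \<Rightarrow> nat \<Rightarrow> nat \<Rightarrow> nat \<Rightarrow> nat \<Rightarrow> nat \<Rightarrow> nat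
                    \<Rightarrow> real vec \<Rightarrow> real mat \<Rightarrow> real" where
  "G2 y z q m c k h T \<beta> \<Gamma> = det (resid_cov y z q m c k h T \<beta> \<Gamma>)"

(* F(beta): rows f_t(beta)' = (X_t beta)', t = c+k+1..T-h *)
definition Fmat :: "(nat \<Rightarrow> real vec) \<Rightarrow> nat \<Rightarrow> nat \<Rightarrow> nat \<Rightarrow> nat \<Rightarrow> nat \<Rightarrow> real vec \<Rightarrow> real mat" where
  "Fmat z m c k h T \<beta> = mat (nobs c k h T) (k + 1)
      (\<lambda>(r,j). (Xmat z m c k (c + k + 1 + r) *\<^sub>v \<beta>) $ j)"

(* Y: rows y_{t+h}', t = c+k+1..T-h *)
definition Ymat :: "(nat \<Rightarrow> real vec) \<Rightarrow> nat \<Rightarrow> nat \<Rightarrow> nat \<Rightarrow> nat \<Rightarrow> nat \<Rightarrow> real mat" where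
  "Ymat y q c k h T = mat (nobs c k h T) q (\<lambda>(r,i). y (c + k + 1 + r + h) $ i)"

definition Gls :: "(nat \<Rightarrow> real vec) \<Rightarrow> (nat \<Rightarrow> real vec) \<Rightarrow> nat \<Rightarrow> nat \<Rightarrow> nat \<Rightarrow> nat \<Rightarrow> nat \<Rightarrow> nat
                    \<Rightarrow> real vec \<Rightarrow> real mat" where
  "Gls y z q m c k h T \<beta> =
     transpose_mat (Ymat y q c k h T) * Fmat z m c k h T \<beta>
       * minv (transpose_mat (Fmat z m c k h T \<beta>) * Fmat z m c k h T \<beta>)"

end

theory Submission
  imports Defs Complex_Main
begin

(* Since (beta, Gamma) minimises G_2, the determinant of the residual covariance is stationary along
   every line through the minimiser. Along a line the residuals become e_t - s u_t and the covariance
   becomes Sigma + s B + s^2 C with B = -(1/n) sum_t (e_t u_t' + u_t e_t'); by Jacobi's formula the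
   derivative of its determinant at s = 0 is det Sigma tr(Sigma^-1 B), so stationarity is the
   orthogonality relation sum_t u_t' Sigma^-1 e_t = 0. Moving Gamma along Sigma Delta gives
   u_t = Sigma Delta f_t, and orthogonality for all Delta says sum_t e_t f_t' = 0, i.e. the least
   squares normal equations Gamma F'F = Y'F. Moving beta along delta gives u_t = Gamma X_t delta, and
   orthogonality for all delta is the generalised least squares normal equation for beta with
   weight Sigma^-1. *)

lemma minv_eqI:
  assumes "A \<in> carrier_mat n n" and "B \<in> carrier_mat n n"
    and "A * B = 1\<^sub>m n" and "B * A = 1\<^sub>m n"
  shows "minv A = B"
  unfolding minv_def
proof (rule the_equality)
  show "inverts_mat A B \<and> inverts_mat B A"
    using assms by (auto simp: inverts_mat_def)
next
  fix B' assume "inverts_mat A B' \<and> inverts_mat B' A"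
  then have AB': "A * B' = 1\<^sub>m n" and B'A: "B' * A = 1\<^sub>m (dim_row B')"
    using assms(1) by (auto simp: inverts_mat_def)
  have "B' \<in> carrier_mat n n"
    using arg_cong[OF AB', of dim_col] arg_cong[OF B'A, of dim_col] assms(1) by auto
  then have "B' = B' * (A * B)"
    using assms(3) by simp
  also have "\<dots> = (B' * A) * B"
    using \<open>B' \<in> carrier_mat n n\<close> assms(1,2) by simp
  also have "\<dots> = B"
    using B'A \<open>B' \<in> carrier_mat n n\<close> assms(2) by simp
  finally show "B' = B" .
qed

lemma minv_inverse:
  assumes A: "A \<in> carrier_mat n n" and "invertible_mat A"
  shows "minv A \<in> carrier_mat n n" and "A * minv A = 1\<^sub>m n" and "minv A * A = 1\<^sub>m n"
proof -
  obtain B where AB: "A * B = 1\<^sub>m n" and BA: "B * A = 1\<^sub>m (dim_row B)"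
    using assms unfolding invertible_mat_def inverts_mat_def by auto
  have B: "B \<in> carrier_mat n n"
    using arg_cong[OF AB, of dim_col] arg_cong[OF BA, of dim_col] A by auto
  then have "minv A = B"
    using minv_eqI[OF A B AB] BA by simp
  then show "minv A \<in> carrier_mat n n" and "A * minv A = 1\<^sub>m n" and "minv A * A = 1\<^sub>m n"
    using B AB BA by simp_all
qed

lemma invertible_mat_if_det_nonzero:
  assumes A: "A \<in> carrier_mat n n" and "det A \<noteq> (0 :: real)"
  shows "invertible_mat A"
proof -
  have "A \<in> Units (ring_mat TYPE(real) n n)"
    by (rule det_non_zero_imp_unit[OF assms])
  then obtain B where "B \<in> carrier_mat n n" "A * B = 1\<^sub>m n" "B * A = 1\<^sub>m n"
    unfolding Units_def ring_mat_def by auto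
  then show ?thesis
    using A unfolding invertible_mat_def inverts_mat_def square_mat.simps by auto
qed

lemma transpose_minv_symmetric:
  assumes A: "A \<in> carrier_mat n n" and "invertible_mat A" and sym: "transpose_mat A = A"
  shows "transpose_mat (minv A) = minv A"
proof -
  note W = minv_inverse[OF assms(1,2)]
  have "A * transpose_mat (minv A) = transpose_mat (minv A * A)"
    using transpose_mult[OF W(1) A] sym by simp
  moreover have "transpose_mat (minv A) * A = transpose_mat (A * minv A)"
    using transpose_mult[OF A W(1)] sym by simp
  ultimately have "minv A = transpose_mat (minv A)"
    using minv_eqI[OF A, of "transpose_mat (minv A)"] W by simp
  then show ?thesis by simp
qed

lemma mult_minv_cancel_right:
  fixes A X :: "real mat"
  assumes A: "A \<in> carrier_mat n n" "invertible_mat A" and X: "X \<in> carrier_mat r n"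
  shows "X * A * minv A = X"
proof -
  note W = minv_inverse[OF A]
  have "X * A * minv A = X * (A * minv A)"
    using A W X by (intro assoc_mult_mat) auto
  then show ?thesis
    using W X by simp
qed

lemma minv_mult_mat_vec_cancel:
  fixes A :: "real mat"
  assumes A: "A \<in> carrier_mat n n" "invertible_mat A" and x: "x \<in> carrier_vec n"
  shows "minv A *\<^sub>v (A *\<^sub>v x) = x"
proof -
  note W = minv_inverse[OF A]
  have "minv A *\<^sub>v (A *\<^sub>v x) = (minv A * A) *\<^sub>v x"
    using A W x by (intro assoc_mult_mat_vec[symmetric]) auto
  then show ?thesis
    using W x by simp
qed

lemma index_mult_mat_sum:
  assumes "A \<in> carrier_mat nr nk" "B \<in> carrier_mat nk nc" "i < nr" "j < nc"
  shows "(A * B) $$ (i, j) = (\<Sum>l<nk. A $$ (i, l) * B $$ (l, j))"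
  using assms by (auto simp: scalar_prod_def atLeast0LessThan intro!: sum.cong)

lemma index_mult_mat_vec_sum:
  assumes "A \<in> carrier_mat nr nc" "v \<in> carrier_vec nc" "i < nr"
  shows "(A *\<^sub>v v) $ i = (\<Sum>j<nc. A $$ (i, j) * v $ j)"
  using assms by (auto simp: scalar_prod_def atLeast0LessThan intro!: sum.cong)

lemma smult_mat_mult_mat_vec:
  fixes A :: "real mat"
  assumes "A \<in> carrier_mat nr nc" and "v \<in> carrier_vec nc"
  shows "(a \<cdot>\<^sub>m A) *\<^sub>v v = a \<cdot>\<^sub>v (A *\<^sub>v v)"
  using assms by (intro eq_vecI) auto

lemma scalar_prod_mult_mat_vec_transpose:
  fixes A :: "real mat"
  assumes A: "A \<in> carrier_mat nr nc" and x: "x \<in> carrier_vec nc" and y: "y \<in> carrier_vec nr"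
  shows "(A *\<^sub>v x) \<bullet> y = x \<bullet> (transpose_mat A *\<^sub>v y)"
proof -
  have "(A *\<^sub>v x) \<bullet> y = y \<bullet> (A *\<^sub>v x)"
    using A x y by (intro comm_scalar_prod) auto
  also have "\<dots> = (transpose_mat A *\<^sub>v y) \<bullet> x"
    by (rule transpose_vec_mult_scalar[OF A x y, symmetric])
  also have "\<dots> = x \<bullet> (transpose_mat A *\<^sub>v y)"
    using A x y by (intro comm_scalar_prod) auto
  finally show ?thesis .
qed

lemma symmetric_mat_scalar_prod:
  fixes A :: "real mat"
  assumes A: "A \<in> carrier_mat n n" and sym: "transpose_mat A = A"
    and x: "x \<in> carrier_vec n" and y: "y \<in> carrier_vec n"
  shows "(A *\<^sub>v x) \<bullet> y = x \<bullet> (A *\<^sub>v y)"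
  using scalar_prod_mult_mat_vec_transpose[OF A x y] sym by simp

lemma scalar_prod_mult_mat_vec_expand:
  fixes W :: "real mat"
  assumes "W \<in> carrier_mat q q" "v \<in> carrier_vec q" "w \<in> carrier_vec q"
  shows "w \<bullet> (W *\<^sub>v v) = (\<Sum>i<q. \<Sum>j<q. w $ i * W $$ (i, j) * v $ j)"
  using assms
  by (auto simp: scalar_prod_def atLeast0LessThan sum_distrib_left mult.assoc intro!: sum.cong)

lemma scalar_prod_self_eq_0_iff:
  fixes v :: "real vec"
  assumes "v \<in> carrier_vec n"
  shows "v \<bullet> v = 0 \<longleftrightarrow> v = 0\<^sub>v n"
proof
  assume "v \<bullet> v = 0"
  then have "(\<Sum>l\<in>{0..<n}. v $ l * v $ l) = 0"
    using assms by (simp add: scalar_prod_def)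
  then have "\<forall>l\<in>{0..<n}. v $ l * v $ l = 0"
    by (subst (asm) sum_nonneg_eq_0_iff) auto
  then show "v = 0\<^sub>v n"
    using assms by (intro eq_vecI) auto
qed simp

lemma transpose_mult_sandwich:
  fixes \<Gamma> X W :: "real mat"
  assumes \<Gamma>: "\<Gamma> \<in> carrier_mat q r" and X: "X \<in> carrier_mat r p" and W: "W \<in> carrier_mat q q"
  shows "transpose_mat (\<Gamma> * X) * W = transpose_mat X * transpose_mat \<Gamma> * W"
    and "transpose_mat X * transpose_mat \<Gamma> * W * (\<Gamma> * X) = transpose_mat X * transpose_mat \<Gamma> * W * \<Gamma> * X"
proof -
  show "transpose_mat (\<Gamma> * X) * W = transpose_mat X * transpose_mat \<Gamma> * W"
    by (simp add: transpose_mult[OF \<Gamma> X])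
  have "transpose_mat X * transpose_mat \<Gamma> * W \<in> carrier_mat p q"
    using \<Gamma> X W by (meson mult_carrier_mat transpose_carrier_mat)
  then show "transpose_mat X * transpose_mat \<Gamma> * W * (\<Gamma> * X) = transpose_mat X * transpose_mat \<Gamma> * W * \<Gamma> * X"
    using \<Gamma> X by (intro assoc_mult_mat[symmetric]) auto
qed

section \<open>Jacobi's formula and minimal determinants\<close>

definition trace :: "'a :: comm_ring_1 mat \<Rightarrow> 'a" where
  "trace A = (\<Sum>i<dim_row A. A $$ (i, i))"

lemma trace_smult: "A \<in> carrier_mat n n \<Longrightarrow> trace (c \<cdot>\<^sub>m A) = c * trace A"
  by (simp add: trace_def sum_distrib_left)

lemma permutation_moves_other_point:
  assumes p: "p permutes S" and "p \<noteq> id" and i: "i \<in> S"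
  shows "\<exists>j\<in>S - {i}. p j \<noteq> j"
proof -
  obtain x where x: "p x \<noteq> x"
    using \<open>p \<noteq> id\<close> by (metis eq_id_iff)
  then have "x \<in> S"
    using p unfolding permutes_def by metis
  show ?thesis
  proof (cases "x = i")
    case False
    then show ?thesis using x \<open>x \<in> S\<close> by auto
  next
    case True
    have "p (p i) \<noteq> p i"
      using x True permutes_inj[OF p] by (metis injD)
    moreover have "p i \<in> S"
      using p i by (simp add: permutes_in_image)
    ultimately show ?thesis
      using x True by auto
  qed
qed

lemma det_has_derivative_trace_at_one:
  fixes M :: "real \<Rightarrow> real mat"
  assumes M: "\<And>s. M s \<in> carrier_mat n n" and M0: "M 0 = 1\<^sub>m n" and B: "B \<in> carrier_mat n n"
    and deriv: "\<And>i j. i < n \<Longrightarrow> j < n \<Longrightarrow>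
                  ((\<lambda>s. M s $$ (i, j)) has_real_derivative B $$ (i, j)) (at 0)"
  shows "((\<lambda>s. det (M s)) has_real_derivative trace B) (at 0)"
proof -
  define P where "P = {p. p permutes {0..<n}}"
  define contribution where "contribution p = signof p * (\<Sum>i\<in>{0..<n}. B $$ (i, p i)
                                 * (\<Prod>j\<in>{0..<n} - {i}. M 0 $$ (j, p j)))" for p
  have det_M: "det (M s) = (\<Sum>p\<in>P. signof p * (\<Prod>i\<in>{0..<n}. M s $$ (i, p i)))" for s
    using M[of s] unfolding det_def P_def by simp
  have "((\<lambda>s. \<Sum>p\<in>P. signof p * (\<Prod>i\<in>{0..<n}. M s $$ (i, p i)))
          has_real_derivative (\<Sum>p\<in>P. contribution p)) (at 0)"
    unfolding contribution_def P_def
    by (intro DERIV_sum DERIV_cmult has_field_derivative_prod deriv)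
       (auto simp: permutes_in_image)
  \<comment> \<open>A permutation other than id moves some j other than i, so the product keeps an
     off-diagonal entry of M 0 = 1.\<close>
  moreover have "contribution p = 0" if "p \<in> P" "p \<noteq> id" for p
  proof -
    have "(\<Prod>j\<in>{0..<n} - {i}. M 0 $$ (j, p j)) = 0" if "i \<in> {0..<n}" for i
      using permutation_moves_other_point[of p "{0..<n}" i] \<open>p \<in> P\<close> \<open>p \<noteq> id\<close> that
      by (auto simp: P_def M0 intro!: prod_zero)
    then show ?thesis unfolding contribution_def by (auto intro!: sum.neutral)
  qed
  then have "(\<Sum>p\<in>P. contribution p) = (\<Sum>p\<in>{id}. contribution p)"
    by (intro sum.mono_neutral_right) (auto simp: P_def permutes_id finite_permutations)
  moreover have "contribution id = trace B"
    using B by (auto simp: contribution_def trace_def M0 atLeast0LessThan intro!: sum.cong prod.neutral)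
  ultimately show ?thesis
    unfolding det_M by simp
qed

lemma quadratic_pencil_factor:
  fixes A B C :: "real mat"
  assumes A: "A \<in> carrier_mat n n" "invertible_mat A"
    and B: "B \<in> carrier_mat n n" and C: "C \<in> carrier_mat n n"
  shows "A * (1\<^sub>m n + s \<cdot>\<^sub>m (minv A * B) + s\<^sup>2 \<cdot>\<^sub>m (minv A * C)) = A + s \<cdot>\<^sub>m B + s\<^sup>2 \<cdot>\<^sub>m C"
proof -
  note W = minv_inverse[OF A]
  have AW: "A * (t \<cdot>\<^sub>m (minv A * D)) = t \<cdot>\<^sub>m D" if D: "D \<in> carrier_mat n n" for t D
  proof -
    have "A * (t \<cdot>\<^sub>m (minv A * D)) = t \<cdot>\<^sub>m (A * (minv A * D))"
      using A W D by (intro mult_smult_distrib) auto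
    also have "A * (minv A * D) = (A * minv A) * D"
      using A W D by (intro assoc_mult_mat[symmetric]) auto
    finally show ?thesis
      unfolding W(2) using D by simp
  qed
  have "A * (1\<^sub>m n + s \<cdot>\<^sub>m (minv A * B) + s\<^sup>2 \<cdot>\<^sub>m (minv A * C))
      = A * (1\<^sub>m n + s \<cdot>\<^sub>m (minv A * B)) + A * (s\<^sup>2 \<cdot>\<^sub>m (minv A * C))"
    using A B C W by (intro mult_add_distrib_mat) auto
  also have "A * (1\<^sub>m n + s \<cdot>\<^sub>m (minv A * B)) = A * 1\<^sub>m n + A * (s \<cdot>\<^sub>m (minv A * B))"
    using A B W by (intro mult_add_distrib_mat) auto
  finally show ?thesis
    using A by (simp add: AW B C)
qed

lemma det_minimal_imp_trace_minv_mult_eq_0: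
  fixes A B C :: "real mat"
  assumes A: "A \<in> carrier_mat n n" and dA: "det A \<noteq> 0"
    and B: "B \<in> carrier_mat n n" and C: "C \<in> carrier_mat n n"
    and min: "\<And>s. det A \<le> det (A + s \<cdot>\<^sub>m B + s\<^sup>2 \<cdot>\<^sub>m C)"
  shows "trace (minv A * B) = 0"
proof -
  have inv: "invertible_mat A"
    by (rule invertible_mat_if_det_nonzero[OF A dA])
  note W = minv_inverse[OF A inv]
  define M where "M s = 1\<^sub>m n + s \<cdot>\<^sub>m (minv A * B) + s\<^sup>2 \<cdot>\<^sub>m (minv A * C)" for s
  have M: "M s \<in> carrier_mat n n" for s
    using W B C by (simp add: M_def)
  have factor: "det (A + s \<cdot>\<^sub>m B + s\<^sup>2 \<cdot>\<^sub>m C) = det A * det (M s)" for s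
    using det_mult[OF A M] quadratic_pencil_factor[OF A inv B C] by (simp add: M_def)
  have M0: "M 0 = 1\<^sub>m n"
    using W B C by (intro eq_matI) (auto simp: M_def)
  then have "((\<lambda>s. det A * det (M s)) has_real_derivative det A * trace (minv A * B)) (at 0)"
    using W B C
    by (intro DERIV_cmult det_has_derivative_trace_at_one[OF M])
       (auto simp: M_def intro!: derivative_eq_intros)
  moreover have "det A * det (M 0) \<le> det A * det (M s)" for s
    using min[of s] factor[of s] M0 by simp
  ultimately have "det A * trace (minv A * B) = 0"
    by (intro DERIV_local_min[of _ _ 0 1]) auto
  with dA show ?thesis
    by simp
qed

section \<open>Stationarity of the generalised variance\<close>

lemma mat_sum_cong:
  "(\<And>t. t \<in> S \<Longrightarrow> f t = g t) \<Longrightarrow> mat_sum n n' f S = mat_sum n n' g S"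
  unfolding mat_sum_def by (auto intro!: eq_matI sum.cong)

lemma transpose_mat_sum_outer:
  assumes "\<And>t. t \<in> S \<Longrightarrow> e t \<in> carrier_vec q"
  shows "transpose_mat (a \<cdot>\<^sub>m mat_sum q q (\<lambda>t. outer (e t)) S) = a \<cdot>\<^sub>m mat_sum q q (\<lambda>t. outer (e t)) S"
proof -
  have [simp]: "dim_vec (e t) = q" if "t \<in> S" for t
    using assms[OF that] by simp
  show ?thesis
    by (intro eq_matI) (auto simp: mat_sum_def outer_def mult.commute intro!: sum.cong)
qed

definition sym_cross_sum :: "nat \<Rightarrow> (nat \<Rightarrow> real vec) \<Rightarrow> (nat \<Rightarrow> real vec) \<Rightarrow> nat set \<Rightarrow> real mat"
  where "sym_cross_sum q e u S = mat q q (\<lambda>(i, j). \<Sum>t\<in>S. e t $ i * u t $ j + u t $ i * e t $ j)"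

lemma mat_sum_outer_diff:
  assumes e: "\<And>t. t \<in> S \<Longrightarrow> e t \<in> carrier_vec q" and u: "\<And>t. t \<in> S \<Longrightarrow> u t \<in> carrier_vec q"
  shows "a \<cdot>\<^sub>m mat_sum q q (\<lambda>t. outer (e t - s \<cdot>\<^sub>v u t)) S
       = a \<cdot>\<^sub>m mat_sum q q (\<lambda>t. outer (e t)) S + s \<cdot>\<^sub>m (- a \<cdot>\<^sub>m sym_cross_sum q e u S)
         + s\<^sup>2 \<cdot>\<^sub>m (a \<cdot>\<^sub>m mat_sum q q (\<lambda>t. outer (u t)) S)"
proof (rule eq_matI)
  fix i j assume "i < dim_row (a \<cdot>\<^sub>m mat_sum q q (\<lambda>t. outer (e t)) S + s \<cdot>\<^sub>m (- a \<cdot>\<^sub>m sym_cross_sum q e u S)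
         + s\<^sup>2 \<cdot>\<^sub>m (a \<cdot>\<^sub>m mat_sum q q (\<lambda>t. outer (u t)) S))"
    and "j < dim_col (a \<cdot>\<^sub>m mat_sum q q (\<lambda>t. outer (e t)) S + s \<cdot>\<^sub>m (- a \<cdot>\<^sub>m sym_cross_sum q e u S)
         + s\<^sup>2 \<cdot>\<^sub>m (a \<cdot>\<^sub>m mat_sum q q (\<lambda>t. outer (u t)) S))"
  then have ij: "i < q" "j < q"
    by (simp_all add: mat_sum_def)
  have [simp]: "dim_vec (e t) = q" "dim_vec (u t) = q" if "t \<in> S" for t
    using e[OF that] u[OF that] by auto
  have "(a \<cdot>\<^sub>m mat_sum q q (\<lambda>t. outer (e t - s \<cdot>\<^sub>v u t)) S) $$ (i, j)
      = a * (\<Sum>t\<in>S. (e t $ i - s * u t $ i) * (e t $ j - s * u t $ j))"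
    using ij e u by (auto simp: mat_sum_def outer_def intro!: sum.cong)
  also have "\<dots> = a * (\<Sum>t\<in>S. e t $ i * e t $ j)
      + s * (- a * (\<Sum>t\<in>S. e t $ i * u t $ j + u t $ i * e t $ j))
      + s\<^sup>2 * (a * (\<Sum>t\<in>S. u t $ i * u t $ j))"
    by (simp add: algebra_simps power2_eq_square sum.distrib sum_distrib_left sum_subtractf sum_negf)
  also have "\<dots> = (a \<cdot>\<^sub>m mat_sum q q (\<lambda>t. outer (e t)) S + s \<cdot>\<^sub>m (- a \<cdot>\<^sub>m sym_cross_sum q e u S)
         + s\<^sup>2 \<cdot>\<^sub>m (a \<cdot>\<^sub>m mat_sum q q (\<lambda>t. outer (u t)) S)) $$ (i, j)"
    using ij e u by (auto simp: mat_sum_def outer_def sym_cross_sum_def intro!: sum.cong)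
  finally show "(a \<cdot>\<^sub>m mat_sum q q (\<lambda>t. outer (e t - s \<cdot>\<^sub>v u t)) S) $$ (i, j)
      = (a \<cdot>\<^sub>m mat_sum q q (\<lambda>t. outer (e t)) S + s \<cdot>\<^sub>m (- a \<cdot>\<^sub>m sym_cross_sum q e u S)
         + s\<^sup>2 \<cdot>\<^sub>m (a \<cdot>\<^sub>m mat_sum q q (\<lambda>t. outer (u t)) S)) $$ (i, j)" .
qed (simp_all add: mat_sum_def sym_cross_sum_def)

lemma trace_mult_sym_cross_sum:
  fixes W :: "real mat"
  assumes W: "W \<in> carrier_mat q q" and sym: "transpose_mat W = W"
    and e: "\<And>t. t \<in> S \<Longrightarrow> e t \<in> carrier_vec q" and u: "\<And>t. t \<in> S \<Longrightarrow> u t \<in> carrier_vec q"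
  shows "trace (W * sym_cross_sum q e u S) = 2 * (\<Sum>t\<in>S. u t \<bullet> (W *\<^sub>v e t))"
proof -
  have "trace (W * sym_cross_sum q e u S)
      = (\<Sum>i<q. \<Sum>j<q. W $$ (i, j) * (\<Sum>t\<in>S. e t $ j * u t $ i + u t $ j * e t $ i))"
    using W by (auto simp: trace_def sym_cross_sum_def scalar_prod_def atLeast0LessThan intro!: sum.cong)
  also have "\<dots> = (\<Sum>t\<in>S. (\<Sum>i<q. \<Sum>j<q. u t $ i * W $$ (i, j) * e t $ j)
                         + (\<Sum>i<q. \<Sum>j<q. e t $ i * W $$ (i, j) * u t $ j))"
    by (simp add: sum.distrib sum_distrib_left algebra_simps sum.swap[of _ S])
  also have "\<dots> = (\<Sum>t\<in>S. u t \<bullet> (W *\<^sub>v e t) + e t \<bullet> (W *\<^sub>v u t))"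
    using W e u by (simp add: scalar_prod_mult_mat_vec_expand)
  also have "\<dots> = (\<Sum>t\<in>S. 2 * (u t \<bullet> (W *\<^sub>v e t)))"
  proof (intro sum.cong refl)
    fix t assume "t \<in> S"
    have "e t \<bullet> (W *\<^sub>v u t) = (W *\<^sub>v e t) \<bullet> u t"
      using symmetric_mat_scalar_prod[OF W sym e u] \<open>t \<in> S\<close> by simp
    also have "\<dots> = u t \<bullet> (W *\<^sub>v e t)"
      using W e u \<open>t \<in> S\<close> by (intro comm_scalar_prod) auto
    finally show "u t \<bullet> (W *\<^sub>v e t) + e t \<bullet> (W *\<^sub>v u t) = 2 * (u t \<bullet> (W *\<^sub>v e t))"
      by simp
  qed
  finally show ?thesis
    by (simp add: sum_distrib_left)
qed

lemma orthogonal_if_det_cov_minimal: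
  fixes e u :: "nat \<Rightarrow> real vec" and a :: real and q :: nat and S :: "nat set"
  defines "A \<equiv> a \<cdot>\<^sub>m mat_sum q q (\<lambda>t. outer (e t)) S"
  assumes a: "a \<noteq> 0"
    and e: "\<And>t. t \<in> S \<Longrightarrow> e t \<in> carrier_vec q" and u: "\<And>t. t \<in> S \<Longrightarrow> u t \<in> carrier_vec q"
    and dA: "det A \<noteq> 0"
    and min: "\<And>s. det A \<le> det (a \<cdot>\<^sub>m mat_sum q q (\<lambda>t. outer (e t - s \<cdot>\<^sub>v u t)) S)"
  shows "(\<Sum>t\<in>S. u t \<bullet> (minv A *\<^sub>v e t)) = 0"
proof -
  have A: "A \<in> carrier_mat q q"
    by (simp add: A_def mat_sum_def)
  have "transpose_mat A = A"
    unfolding A_def by (rule transpose_mat_sum_outer[OF e])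
  then have sym: "transpose_mat (minv A) = minv A"
    using transpose_minv_symmetric[OF A invertible_mat_if_det_nonzero[OF A dA]] by simp
  have W: "minv A \<in> carrier_mat q q"
    using minv_inverse(1)[OF A invertible_mat_if_det_nonzero[OF A dA]] .
  have X: "sym_cross_sum q e u S \<in> carrier_mat q q"
    by (simp add: sym_cross_sum_def)
  have "trace (minv A * (- a \<cdot>\<^sub>m sym_cross_sum q e u S)) = 0"
  proof (rule det_minimal_imp_trace_minv_mult_eq_0[OF A dA])
    fix s
    show "det A \<le> det (A + s \<cdot>\<^sub>m (- a \<cdot>\<^sub>m sym_cross_sum q e u S)
                         + s\<^sup>2 \<cdot>\<^sub>m (a \<cdot>\<^sub>m mat_sum q q (\<lambda>t. outer (u t)) S))"
      using min[of s] mat_sum_outer_diff[OF e u, where a = a and s = s] unfolding A_def by simp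
  qed (simp_all add: X mat_sum_def)
  moreover have "trace (minv A * (- a \<cdot>\<^sub>m sym_cross_sum q e u S))
      = - a * (2 * (\<Sum>t\<in>S. u t \<bullet> (minv A *\<^sub>v e t)))"
    using W X trace_mult_sym_cross_sum[OF W sym e u]
    by (simp add: mult_smult_distrib[OF W X] trace_smult[of _ q])
  ultimately show ?thesis
    using a by simp
qed

section \<open>Normal equations\<close>

lemma sum_cross_eq_0_if_orthogonal:
  fixes e f :: "nat \<Rightarrow> real vec"
  assumes f: "\<And>t. t \<in> S \<Longrightarrow> f t \<in> carrier_vec r" and e: "\<And>t. t \<in> S \<Longrightarrow> e t \<in> carrier_vec q"
    and orth: "\<And>\<Delta>. \<Delta> \<in> carrier_mat q r \<Longrightarrow> (\<Sum>t\<in>S. (\<Delta> *\<^sub>v f t) \<bullet> e t) = 0"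
    and i: "i < q" and j: "j < r"
  shows "(\<Sum>t\<in>S. e t $ i * f t $ j) = 0"
proof -
  define \<Delta> where "\<Delta> = mat q r (\<lambda>(a, b). if a = i \<and> b = j then 1 else (0 :: real))"
  have "\<Delta> *\<^sub>v f t = f t $ j \<cdot>\<^sub>v unit_vec q i" if "t \<in> S" for t
    using f[OF that] i j
    by (intro eq_vecI) (auto simp: \<Delta>_def scalar_prod_def if_distrib[of "\<lambda>x. x * _"] cong: if_cong)
  then have "(\<Delta> *\<^sub>v f t) \<bullet> e t = e t $ i * f t $ j" if "t \<in> S" for t
    using e[OF that] i that by simp
  then show ?thesis
    using orth[of \<Delta>] by (simp add: \<Delta>_def)
qed

lemma scalar_prod_finsum_vec:
  fixes g :: "nat \<Rightarrow> real vec"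
  assumes S: "finite S" and v: "v \<in> carrier_vec n" and g: "\<And>t. t \<in> S \<Longrightarrow> g t \<in> carrier_vec n"
  shows "v \<bullet> finsum_vec TYPE(real) n g S = (\<Sum>t\<in>S. v \<bullet> g t)"
proof -
  have [simp]: "dim_vec (g t) = n" if "t \<in> S" for t
    using g[OF that] by simp
  have "v \<bullet> finsum_vec TYPE(real) n g S = (\<Sum>l\<in>{0..<n}. v $ l * (\<Sum>t\<in>S. g t $ l))"
    using v finsum_vec_closed[of g S n] g
    by (auto simp: scalar_prod_def index_finsum_vec[OF S] intro!: sum.cong)
  also have "\<dots> = (\<Sum>t\<in>S. v \<bullet> g t)"
    using v g by (auto simp: scalar_prod_def sum_distrib_left sum.swap[of _ S] intro!: sum.cong)
  finally show ?thesis .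
qed

lemma finsum_vec_eq_0_if_orthogonal:
  fixes g :: "nat \<Rightarrow> real vec"
  assumes S: "finite S" and g: "\<And>t. t \<in> S \<Longrightarrow> g t \<in> carrier_vec n"
    and orth: "\<And>\<delta>. \<delta> \<in> carrier_vec n \<Longrightarrow> (\<Sum>t\<in>S. \<delta> \<bullet> g t) = 0"
  shows "finsum_vec TYPE(real) n g S = 0\<^sub>v n"
proof -
  have v: "finsum_vec TYPE(real) n g S \<in> carrier_vec n"
    using finsum_vec_closed[of g S n] g by auto
  show ?thesis
    using orth[OF v] scalar_prod_finsum_vec[OF S v g] scalar_prod_self_eq_0_iff[OF v] by simp
qed

lemma finsum_vec_eq_if_finsum_diff_eq_0:
  fixes f g :: "nat \<Rightarrow> real vec"
  assumes S: "finite S" and f: "\<And>t. t \<in> S \<Longrightarrow> f t \<in> carrier_vec n"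
    and g: "\<And>t. t \<in> S \<Longrightarrow> g t \<in> carrier_vec n"
    and diff: "finsum_vec TYPE(real) n (\<lambda>t. f t - g t) S = 0\<^sub>v n"
  shows "finsum_vec TYPE(real) n f S = finsum_vec TYPE(real) n g S"
proof -
  have [simp]: "dim_vec (f t) = n" "dim_vec (g t) = n" if "t \<in> S" for t
    using f[OF that] g[OF that] by auto
  have "finsum_vec TYPE(real) n f S $ l = finsum_vec TYPE(real) n g S $ l" if l: "l < n" for l
  proof -
    have "(\<Sum>t\<in>S. f t $ l) - (\<Sum>t\<in>S. g t $ l) = (\<Sum>t\<in>S. (f t - g t) $ l)"
      using f g l by (auto simp: sum_subtractf[symmetric] intro!: sum.cong)
    also have "\<dots> = 0"
      using index_finsum_vec[OF S l, of "\<lambda>t. f t - g t"] f g diff l by auto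
    finally show ?thesis
      using f g by (simp add: index_finsum_vec[OF S l])
  qed
  then show ?thesis
    using finsum_vec_closed[of f S n] finsum_vec_closed[of g S n] f g by (intro eq_vecI) auto
qed

lemma mat_sum_mult_mat_vec:
  fixes M :: "nat \<Rightarrow> real mat"
  assumes S: "finite S" and M: "\<And>t. t \<in> S \<Longrightarrow> M t \<in> carrier_mat n n'" and v: "v \<in> carrier_vec n'"
  shows "mat_sum n n' M S *\<^sub>v v = finsum_vec TYPE(real) n (\<lambda>t. M t *\<^sub>v v) S"
proof -
  have [simp]: "dim_row (M t) = n" "dim_col (M t) = n'" if "t \<in> S" for t
    using M[OF that] by auto
  have sum_carrier: "finsum_vec TYPE(real) n (\<lambda>t. M t *\<^sub>v v) S \<in> carrier_vec n"
    using M v by (intro finsum_vec_closed) (auto intro: mult_mat_vec_carrier)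
  have "(mat_sum n n' M S *\<^sub>v v) $ l = finsum_vec TYPE(real) n (\<lambda>t. M t *\<^sub>v v) S $ l"
    if l: "l < n" for l
  proof -
    have "(mat_sum n n' M S *\<^sub>v v) $ l = (\<Sum>l'\<in>{0..<n'}. (\<Sum>t\<in>S. M t $$ (l, l')) * v $ l')"
      using l v by (simp add: mat_sum_def scalar_prod_def)
    also have "\<dots> = (\<Sum>t\<in>S. (M t *\<^sub>v v) $ l)"
      using l v M by (auto simp: scalar_prod_def sum_distrib_right sum.swap[of _ S] intro!: sum.cong)
    also have "\<dots> = finsum_vec TYPE(real) n (\<lambda>t. M t *\<^sub>v v) S $ l"
      using M v by (intro index_finsum_vec[OF S l, symmetric]) (auto intro: mult_mat_vec_carrier)
    finally show ?thesis .
  qed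
  then show ?thesis
    using sum_carrier by (intro eq_vecI) (auto simp: mat_sum_def)
qed

lemma transpose_mult_residual:
  fixes G W :: "real mat"
  assumes G: "G \<in> carrier_mat q p" and W: "W \<in> carrier_mat q q"
    and y: "y \<in> carrier_vec q" and \<beta>: "\<beta> \<in> carrier_vec p"
  shows "transpose_mat G *\<^sub>v (W *\<^sub>v (y - G *\<^sub>v \<beta>))
       = transpose_mat G * W *\<^sub>v y - transpose_mat G * W * G *\<^sub>v \<beta>"
proof -
  have G\<beta>: "G *\<^sub>v \<beta> \<in> carrier_vec q"
    using G \<beta> by auto
  have Gt: "transpose_mat G \<in> carrier_mat p q"
    using G by simp
  have "transpose_mat G * W * G *\<^sub>v \<beta> = (transpose_mat G * W) *\<^sub>v (G *\<^sub>v \<beta>)"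
    using G Gt W \<beta> by (intro assoc_mult_mat_vec[of _ p q]) auto
  then have "transpose_mat G * W * G *\<^sub>v \<beta> = transpose_mat G *\<^sub>v (W *\<^sub>v (G *\<^sub>v \<beta>))"
    using G Gt W \<beta> by simp
  moreover have "transpose_mat G * W *\<^sub>v y = transpose_mat G *\<^sub>v (W *\<^sub>v y)"
    using Gt W y by simp
  ultimately show ?thesis
    unfolding mult_minus_distrib_mat_vec[OF W y G\<beta>]
    using Gt W y G\<beta> by (simp add: mult_minus_distrib_mat_vec[of _ p q])
qed

lemma gls_normal_equation:
  fixes G :: "nat \<Rightarrow> real mat" and W :: "real mat" and y :: "nat \<Rightarrow> real vec"
  assumes S: "finite S" and G: "\<And>t. t \<in> S \<Longrightarrow> G t \<in> carrier_mat q p"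
    and W: "W \<in> carrier_mat q q" and y: "\<And>t. t \<in> S \<Longrightarrow> y t \<in> carrier_vec q"
    and \<beta>: "\<beta> \<in> carrier_vec p"
    and orth: "\<And>\<delta>. \<delta> \<in> carrier_vec p \<Longrightarrow>
                 (\<Sum>t\<in>S. (G t *\<^sub>v \<delta>) \<bullet> (W *\<^sub>v (y t - G t *\<^sub>v \<beta>))) = 0"
  shows "mat_sum p p (\<lambda>t. transpose_mat (G t) * W * G t) S *\<^sub>v \<beta>
       = finsum_vec TYPE(real) p (\<lambda>t. transpose_mat (G t) * W *\<^sub>v y t) S"
proof -
  define lhs where "lhs t = transpose_mat (G t) * W * G t *\<^sub>v \<beta>" for t
  define rhs where "rhs t = transpose_mat (G t) * W *\<^sub>v y t" for t
  have Gt: "transpose_mat (G t) \<in> carrier_mat p q" if "t \<in> S" for t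
    using G[OF that] by simp
  have "dim_col (G t) = p" if "t \<in> S" for t
    using G[OF that] by auto
  then have lhs: "lhs t \<in> carrier_vec p" and rhs: "rhs t \<in> carrier_vec p" if "t \<in> S" for t
    using that unfolding lhs_def rhs_def by (auto intro!: carrier_vecI)
  have gradient: "transpose_mat (G t) *\<^sub>v (W *\<^sub>v (y t - G t *\<^sub>v \<beta>)) = rhs t - lhs t"
    if "t \<in> S" for t
    unfolding lhs_def rhs_def by (rule transpose_mult_residual[OF G[OF that] W y[OF that] \<beta>])
  have "finsum_vec TYPE(real) p (\<lambda>t. rhs t - lhs t) S = 0\<^sub>v p"
  proof (rule finsum_vec_eq_0_if_orthogonal[OF S])
    show "rhs t - lhs t \<in> carrier_vec p" if "t \<in> S" for t
      using lhs[OF that] rhs[OF that] by simp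
    fix \<delta> :: "real vec" assume \<delta>: "\<delta> \<in> carrier_vec p"
    have "(G t *\<^sub>v \<delta>) \<bullet> (W *\<^sub>v (y t - G t *\<^sub>v \<beta>)) = \<delta> \<bullet> (rhs t - lhs t)" if "t \<in> S" for t
      unfolding gradient[OF that, symmetric] using G[OF that] W y[OF that] \<beta> \<delta>
      by (intro scalar_prod_mult_mat_vec_transpose) auto
    then show "(\<Sum>t\<in>S. \<delta> \<bullet> (rhs t - lhs t)) = 0"
      using orth[OF \<delta>] by simp
  qed
  then have "finsum_vec TYPE(real) p rhs S = finsum_vec TYPE(real) p lhs S"
    using rhs lhs by (intro finsum_vec_eq_if_finsum_diff_eq_0[OF S])
  moreover have "mat_sum p p (\<lambda>t. transpose_mat (G t) * W * G t) S *\<^sub>v \<beta> = finsum_vec TYPE(real) p lhs S"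
    unfolding lhs_def using Gt G W \<beta> by (intro mat_sum_mult_mat_vec[OF S]) (meson mult_carrier_mat)+
  ultimately show ?thesis
    by (simp add: rhs_def[abs_def])
qed

section \<open>The forecasting model\<close>

lemma sum_window_eq_sum_nobs:
  assumes "h + c + k < T"
  shows "(\<Sum>t\<in>window c k h T. g t) = (\<Sum>r<nobs c k h T. g (c + k + 1 + r))"
proof -
  have "{0..T - h - (c + k + 1)} = {..<nobs c k h T}"
    using assms by (auto simp: nobs_def)
  then show ?thesis
    using assms by (simp add: window_def sum.atLeastAtMost_shift_0 add.commute)
qed

lemma gram_Fmat_index:
  fixes \<Gamma> :: "real mat"
  assumes T_big: "h + c + k < T" and \<Gamma>: "\<Gamma> \<in> carrier_mat q (k + 1)" and ij: "i < q" "j < k + 1"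
  shows "(\<Gamma> * (transpose_mat (Fmat z m c k h T \<beta>) * Fmat z m c k h T \<beta>)) $$ (i, j)
       = (\<Sum>t\<in>window c k h T. (\<Gamma> *\<^sub>v (Xmat z m c k t *\<^sub>v \<beta>)) $ i * (Xmat z m c k t *\<^sub>v \<beta>) $ j)"
proof -
  define n where "n = nobs c k h T"
  define F where "F = Fmat z m c k h T \<beta>"
  define f where "f t = Xmat z m c k t *\<^sub>v \<beta>" for t
  have F: "F \<in> carrier_mat n (k + 1)"
    by (simp add: F_def Fmat_def n_def)
  have f: "f t \<in> carrier_vec (k + 1)" for t
    by (intro carrier_vecI) (simp add: f_def Xmat_def)
  have F_entry: "F $$ (r, l) = f (c + k + 1 + r) $ l" if "r < n" "l < k + 1" for r l
    using that by (simp add: F_def Fmat_def f_def n_def)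
  have "(\<Gamma> * (transpose_mat F * F)) $$ (i, j) = (\<Sum>l<k + 1. \<Gamma> $$ (i, l) * (transpose_mat F * F) $$ (l, j))"
    using F ij by (intro index_mult_mat_sum[OF \<Gamma>]) auto
  also have "\<dots> = (\<Sum>l<k + 1. \<Gamma> $$ (i, l) * (\<Sum>r<n. F $$ (r, l) * F $$ (r, j)))"
    using F ij by (intro sum.cong refl) (simp add: index_mult_mat_sum[of _ "k + 1" n F "k + 1"] del: index_mult_mat)
  also have "\<dots> = (\<Sum>r<n. (\<Gamma> *\<^sub>v f (c + k + 1 + r)) $ i * f (c + k + 1 + r) $ j)"
    using ij
    by (simp add: F_entry index_mult_mat_vec_sum[OF \<Gamma> f] sum_distrib_left sum_distrib_right
        mult.assoc sum.swap[of _ "{..<n}"] del: sum.lessThan_Suc)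
  also have "\<dots> = (\<Sum>t\<in>window c k h T. (\<Gamma> *\<^sub>v f t) $ i * f t $ j)"
    unfolding n_def by (rule sum_window_eq_sum_nobs[OF T_big, symmetric])
  finally show ?thesis
    by (simp add: F_def f_def)
qed

lemma cross_Ymat_Fmat_index:
  assumes T_big: "h + c + k < T" and ij: "i < q" "j < k + 1"
  shows "(transpose_mat (Ymat y q c k h T) * Fmat z m c k h T \<beta>) $$ (i, j)
       = (\<Sum>t\<in>window c k h T. y (t + h) $ i * (Xmat z m c k t *\<^sub>v \<beta>) $ j)"
proof -
  have "(transpose_mat (Ymat y q c k h T) * Fmat z m c k h T \<beta>) $$ (i, j)
      = (\<Sum>r<nobs c k h T. y (c + k + 1 + r + h) $ i * (Xmat z m c k (c + k + 1 + r) *\<^sub>v \<beta>) $ j)"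
    using ij by (simp add: index_mult_mat_sum[of _ q "nobs c k h T" _ "k + 1"] Ymat_def Fmat_def
        del: index_mult_mat)
  then show ?thesis
    by (simp add: sum_window_eq_sum_nobs[OF T_big])
qed

lemma least_squares_normal_equations:
  fixes \<Gamma> :: "real mat"
  assumes T_big: "h + c + k < T" and \<Gamma>: "\<Gamma> \<in> carrier_mat q (k + 1)"
    and orth: "\<And>i j. i < q \<Longrightarrow> j < k + 1 \<Longrightarrow>
      (\<Sum>t\<in>window c k h T. err y z m c k h \<beta> \<Gamma> t $ i * (Xmat z m c k t *\<^sub>v \<beta>) $ j) = 0"
  shows "\<Gamma> * (transpose_mat (Fmat z m c k h T \<beta>) * Fmat z m c k h T \<beta>)
       = transpose_mat (Ymat y q c k h T) * Fmat z m c k h T \<beta>"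
proof (rule eq_matI)
  fix i j assume "i < dim_row (transpose_mat (Ymat y q c k h T) * Fmat z m c k h T \<beta>)"
    and "j < dim_col (transpose_mat (Ymat y q c k h T) * Fmat z m c k h T \<beta>)"
  then have ij: "i < q" "j < k + 1"
    by (simp_all add: Ymat_def Fmat_def)
  have "(\<Sum>t\<in>window c k h T. y (t + h) $ i * (Xmat z m c k t *\<^sub>v \<beta>) $ j)
      - (\<Sum>t\<in>window c k h T. (\<Gamma> *\<^sub>v (Xmat z m c k t *\<^sub>v \<beta>)) $ i * (Xmat z m c k t *\<^sub>v \<beta>) $ j)
      = (\<Sum>t\<in>window c k h T. err y z m c k h \<beta> \<Gamma> t $ i * (Xmat z m c k t *\<^sub>v \<beta>) $ j)"
    unfolding sum_subtractf[symmetric] using \<Gamma> ij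
    by (intro sum.cong refl) (simp add: err_def left_diff_distrib)
  then show "(\<Gamma> * (transpose_mat (Fmat z m c k h T \<beta>) * Fmat z m c k h T \<beta>)) $$ (i, j)
      = (transpose_mat (Ymat y q c k h T) * Fmat z m c k h T \<beta>) $$ (i, j)"
    using orth[OF ij] by (simp add: gram_Fmat_index[OF T_big \<Gamma> ij] cross_Ymat_Fmat_index[OF T_big ij])
qed (use \<Gamma> in \<open>simp_all add: Ymat_def Fmat_def\<close>)

lemma err_shift_Gamma:
  assumes y: "y (t + h) \<in> carrier_vec q" and \<Gamma>: "\<Gamma> \<in> carrier_mat q (k + 1)"
    and \<Delta>: "\<Delta> \<in> carrier_mat q (k + 1)"
  shows "err y z m c k h \<beta> (\<Gamma> + s \<cdot>\<^sub>m \<Delta>) t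
       = err y z m c k h \<beta> \<Gamma> t - s \<cdot>\<^sub>v (\<Delta> *\<^sub>v (Xmat z m c k t *\<^sub>v \<beta>))"
proof -
  have f: "Xmat z m c k t *\<^sub>v \<beta> \<in> carrier_vec (k + 1)"
    by (intro carrier_vecI) (simp add: Xmat_def)
  have "((\<Gamma> + s \<cdot>\<^sub>m \<Delta>) *\<^sub>v (Xmat z m c k t *\<^sub>v \<beta>)) $ i
      = (\<Gamma> *\<^sub>v (Xmat z m c k t *\<^sub>v \<beta>)) $ i + s * (\<Delta> *\<^sub>v (Xmat z m c k t *\<^sub>v \<beta>)) $ i"
    if "i < q" for i
    using that \<Gamma> \<Delta> f
    by (simp add: index_mult_mat_vec_sum[of _ q "k + 1"] sum.distrib sum_distrib_left algebra_simps
        del: sum.lessThan_Suc index_mult_mat_vec)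
  then show ?thesis
    unfolding err_def using y \<Gamma> \<Delta> by (intro eq_vecI) auto
qed

lemma err_shift_beta:
  assumes y: "y (t + h) \<in> carrier_vec q" and \<Gamma>: "\<Gamma> \<in> carrier_mat q (k + 1)"
    and \<beta>: "\<beta> \<in> carrier_vec (m * (c + 1))" and \<delta>: "\<delta> \<in> carrier_vec (m * (c + 1))"
  shows "err y z m c k h (\<beta> + s \<cdot>\<^sub>v \<delta>) \<Gamma> t
       = err y z m c k h \<beta> \<Gamma> t - s \<cdot>\<^sub>v ((\<Gamma> * Xmat z m c k t) *\<^sub>v \<delta>)"
proof -
  have X: "Xmat z m c k t \<in> carrier_mat (k + 1) (m * (c + 1))"
    by (simp add: Xmat_def)
  have "\<Gamma> *\<^sub>v (Xmat z m c k t *\<^sub>v (\<beta> + s \<cdot>\<^sub>v \<delta>))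
      = \<Gamma> *\<^sub>v (Xmat z m c k t *\<^sub>v \<beta>) + s \<cdot>\<^sub>v ((\<Gamma> * Xmat z m c k t) *\<^sub>v \<delta>)"
    using X \<Gamma> \<beta> \<delta>
    by (simp add: mult_add_distrib_mat_vec[OF X] mult_mat_vec[OF X] mult_add_distrib_mat_vec[OF \<Gamma>]
        mult_mat_vec[OF \<Gamma>])
  then show ?thesis
    unfolding err_def using y \<Gamma> by (intro eq_vecI) auto
qed

context
  fixes y z :: "nat \<Rightarrow> real vec" and q m c k h T :: nat
    and \<beta>h :: "real vec" and \<Gamma>h :: "real mat"
  assumes y_dim: "\<forall>t\<in>{1..T}. y t \<in> carrier_vec q"
    and T_big: "h + c + k < T"
    and \<beta>h_dim: "\<beta>h \<in> carrier_vec (m * (c + 1))"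
    and \<Gamma>h_dim: "\<Gamma>h \<in> carrier_mat q (k + 1)"
    and minimizer: "\<forall>\<beta>\<in>carrier_vec (m * (c + 1)). \<forall>\<Gamma>\<in>carrier_mat q (k + 1).
                      G2 y z q m c k h T \<beta>h \<Gamma>h \<le> G2 y z q m c k h T \<beta> \<Gamma>"
    and Sigma_nonsingular: "det (resid_cov y z q m c k h T \<beta>h \<Gamma>h) \<noteq> 0"
begin

lemma y_window_carrier: "t \<in> window c k h T \<Longrightarrow> y (t + h) \<in> carrier_vec q"
  using y_dim T_big by (auto simp: window_def)

lemma err_window_carrier:
  "t \<in> window c k h T \<Longrightarrow> err y z m c k h \<beta>h \<Gamma>h t \<in> carrier_vec q"
  unfolding err_def using y_window_carrier \<Gamma>h_dim
  by (intro minus_carrier_vec) (auto intro!: carrier_vecI)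

lemma resid_cov_carrier: "resid_cov y z q m c k h T \<beta>h \<Gamma>h \<in> carrier_mat q q"
  by (simp add: resid_cov_def mat_sum_def)

lemma resid_cov_symmetric:
  "transpose_mat (resid_cov y z q m c k h T \<beta>h \<Gamma>h) = resid_cov y z q m c k h T \<beta>h \<Gamma>h"
  unfolding resid_cov_def using err_window_carrier by (rule transpose_mat_sum_outer)

lemma minimizer_orthogonal:
  assumes u: "\<And>t. t \<in> window c k h T \<Longrightarrow> u t \<in> carrier_vec q"
    and line: "\<And>s. \<exists>\<beta>\<in>carrier_vec (m * (c + 1)). \<exists>\<Gamma>\<in>carrier_mat q (k + 1).
                 \<forall>t\<in>window c k h T. err y z m c k h \<beta> \<Gamma> t = err y z m c k h \<beta>h \<Gamma>h t - s \<cdot>\<^sub>v u t"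
  shows "(\<Sum>t\<in>window c k h T.
            u t \<bullet> (minv (resid_cov y z q m c k h T \<beta>h \<Gamma>h) *\<^sub>v err y z m c k h \<beta>h \<Gamma>h t)) = 0"
  unfolding resid_cov_def
proof (rule orthogonal_if_det_cov_minimal[OF _ err_window_carrier u])
  show "1 / real (nobs c k h T) \<noteq> 0"
    using T_big by (simp add: nobs_def)
  show "det (1 / real (nobs c k h T) \<cdot>\<^sub>m
          mat_sum q q (\<lambda>t. outer (err y z m c k h \<beta>h \<Gamma>h t)) (window c k h T)) \<noteq> 0"
    using Sigma_nonsingular by (simp add: resid_cov_def)
  fix s
  obtain \<beta> \<Gamma> where "\<beta> \<in> carrier_vec (m * (c + 1))" "\<Gamma> \<in> carrier_mat q (k + 1)"
    and shifted: "\<forall>t\<in>window c k h T. err y z m c k h \<beta> \<Gamma> t = err y z m c k h \<beta>h \<Gamma>h t - s \<cdot>\<^sub>v u t"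
    using line[of s] by blast
  then have "G2 y z q m c k h T \<beta>h \<Gamma>h \<le> G2 y z q m c k h T \<beta> \<Gamma>"
    using minimizer by blast
  moreover have "mat_sum q q (\<lambda>t. outer (err y z m c k h \<beta> \<Gamma> t)) (window c k h T)
      = mat_sum q q (\<lambda>t. outer (err y z m c k h \<beta>h \<Gamma>h t - s \<cdot>\<^sub>v u t)) (window c k h T)"
    using shifted by (intro mat_sum_cong) simp
  ultimately show "det (1 / real (nobs c k h T) \<cdot>\<^sub>m
          mat_sum q q (\<lambda>t. outer (err y z m c k h \<beta>h \<Gamma>h t)) (window c k h T))
      \<le> det (1 / real (nobs c k h T) \<cdot>\<^sub>m
          mat_sum q q (\<lambda>t. outer (err y z m c k h \<beta>h \<Gamma>h t - s \<cdot>\<^sub>v u t)) (window c k h T))"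
    unfolding G2_def resid_cov_def by simp
qed

lemma minimizer_residuals_orthogonal_to_regressors:
  assumes \<Delta>: "\<Delta> \<in> carrier_mat q (k + 1)"
  shows "(\<Sum>t\<in>window c k h T. (\<Delta> *\<^sub>v (Xmat z m c k t *\<^sub>v \<beta>h)) \<bullet> err y z m c k h \<beta>h \<Gamma>h t) = 0"
proof -
  let ?\<Sigma> = "resid_cov y z q m c k h T \<beta>h \<Gamma>h"
  define f where "f t = Xmat z m c k t *\<^sub>v \<beta>h" for t
  have \<Sigma>: "?\<Sigma> \<in> carrier_mat q q" "transpose_mat ?\<Sigma> = ?\<Sigma>"
    by (rule resid_cov_carrier, rule resid_cov_symmetric)
  note W = minv_inverse[OF \<Sigma>(1) invertible_mat_if_det_nonzero[OF \<Sigma>(1) Sigma_nonsingular]]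
  have f: "f t \<in> carrier_vec (k + 1)" for t
    by (intro carrier_vecI) (simp add: f_def Xmat_def)
  have \<Delta>f: "\<Delta> *\<^sub>v f t \<in> carrier_vec q" for t
    using \<Delta> f by simp
  have "(\<Sum>t\<in>window c k h T. ((?\<Sigma> * \<Delta>) *\<^sub>v f t) \<bullet> (minv ?\<Sigma> *\<^sub>v err y z m c k h \<beta>h \<Gamma>h t)) = 0"
  proof (rule minimizer_orthogonal)
    show "(?\<Sigma> * \<Delta>) *\<^sub>v f t \<in> carrier_vec q" for t
      using \<Sigma> \<Delta> f by simp
    show "\<exists>\<beta>\<in>carrier_vec (m * (c + 1)). \<exists>\<Gamma>\<in>carrier_mat q (k + 1). \<forall>t\<in>window c k h T.
            err y z m c k h \<beta> \<Gamma> t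
          = err y z m c k h \<beta>h \<Gamma>h t - s \<cdot>\<^sub>v ((?\<Sigma> * \<Delta>) *\<^sub>v f t)" for s
      using \<beta>h_dim \<Gamma>h_dim \<Sigma> \<Delta> y_window_carrier
      by (intro bexI[of _ \<beta>h] bexI[of _ "\<Gamma>h + s \<cdot>\<^sub>m (?\<Sigma> * \<Delta>)"] ballI)
         (auto simp: err_shift_Gamma[where y = y and h = h, OF y_window_carrier \<Gamma>h_dim mult_carrier_mat[OF \<Sigma>(1) \<Delta>]] f_def)
  qed
  moreover have "((?\<Sigma> * \<Delta>) *\<^sub>v f t) \<bullet> (minv ?\<Sigma> *\<^sub>v e) = (\<Delta> *\<^sub>v f t) \<bullet> e"
    if e: "e \<in> carrier_vec q" for t e
  proof -
    have "((?\<Sigma> * \<Delta>) *\<^sub>v f t) \<bullet> (minv ?\<Sigma> *\<^sub>v e) = (?\<Sigma> *\<^sub>v (\<Delta> *\<^sub>v f t)) \<bullet> (minv ?\<Sigma> *\<^sub>v e)"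
      using \<Sigma> \<Delta> f by simp
    also have "\<dots> = (\<Delta> *\<^sub>v f t) \<bullet> (?\<Sigma> *\<^sub>v (minv ?\<Sigma> *\<^sub>v e))"
      using W e \<Delta>f by (intro symmetric_mat_scalar_prod[OF \<Sigma>]) auto
    also have "?\<Sigma> *\<^sub>v (minv ?\<Sigma> *\<^sub>v e) = e"
      using \<Sigma> W e by (simp flip: assoc_mult_mat_vec[of _ q q _ q])
    finally show ?thesis .
  qed
  ultimately show ?thesis
    using err_window_carrier by (simp add: f_def)
qed

lemma minimizer_Gamma_normal_equations:
  "\<Gamma>h * (transpose_mat (Fmat z m c k h T \<beta>h) * Fmat z m c k h T \<beta>h)
     = transpose_mat (Ymat y q c k h T) * Fmat z m c k h T \<beta>h"
proof (rule least_squares_normal_equations[OF T_big \<Gamma>h_dim])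
  fix i j assume "i < q" "j < k + 1"
  then show "(\<Sum>t\<in>window c k h T. err y z m c k h \<beta>h \<Gamma>h t $ i * (Xmat z m c k t *\<^sub>v \<beta>h) $ j) = 0"
    using err_window_carrier minimizer_residuals_orthogonal_to_regressors
    by (intro sum_cross_eq_0_if_orthogonal[of _ _ "k + 1" _ q]) (auto intro!: carrier_vecI simp: Xmat_def)
qed

lemma minimizer_beta_normal_equation:
  "mat_sum (m * (c + 1)) (m * (c + 1))
     (\<lambda>t. transpose_mat (Xmat z m c k t) * transpose_mat \<Gamma>h
          * minv (resid_cov y z q m c k h T \<beta>h \<Gamma>h) * \<Gamma>h * Xmat z m c k t)
     (window c k h T) *\<^sub>v \<beta>h
   = finsum_vec TYPE(real) (m * (c + 1))
       (\<lambda>t. transpose_mat (Xmat z m c k t) * transpose_mat \<Gamma>h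
            * minv (resid_cov y z q m c k h T \<beta>h \<Gamma>h) *\<^sub>v y (t + h))
       (window c k h T)"
proof -
  let ?\<Sigma> = "resid_cov y z q m c k h T \<beta>h \<Gamma>h"
  let ?p = "m * (c + 1)"
  have X: "Xmat z m c k t \<in> carrier_mat (k + 1) ?p" for t
    by (simp add: Xmat_def)
  have G: "\<Gamma>h * Xmat z m c k t \<in> carrier_mat q ?p" for t
    using \<Gamma>h_dim X by simp
  have W: "minv ?\<Sigma> \<in> carrier_mat q q"
    using minv_inverse(1)[OF resid_cov_carrier invertible_mat_if_det_nonzero[OF resid_cov_carrier Sigma_nonsingular]] .
  have resid: "y (t + h) - (\<Gamma>h * Xmat z m c k t) *\<^sub>v \<beta>h = err y z m c k h \<beta>h \<Gamma>h t" for t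
    unfolding err_def using \<Gamma>h_dim X \<beta>h_dim by (subst assoc_mult_mat_vec) auto
  have "mat_sum ?p ?p (\<lambda>t. transpose_mat (\<Gamma>h * Xmat z m c k t) * minv ?\<Sigma> * (\<Gamma>h * Xmat z m c k t))
          (window c k h T) *\<^sub>v \<beta>h
      = finsum_vec TYPE(real) ?p (\<lambda>t. transpose_mat (\<Gamma>h * Xmat z m c k t) * minv ?\<Sigma> *\<^sub>v y (t + h))
          (window c k h T)"
  proof (rule gls_normal_equation[OF _ G W y_window_carrier \<beta>h_dim])
    show "finite (window c k h T)"
      by (simp add: window_def)
    fix \<delta> :: "real vec" assume \<delta>: "\<delta> \<in> carrier_vec ?p"
    show "(\<Sum>t\<in>window c k h T. ((\<Gamma>h * Xmat z m c k t) *\<^sub>v \<delta>)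
            \<bullet> (minv ?\<Sigma> *\<^sub>v (y (t + h) - (\<Gamma>h * Xmat z m c k t) *\<^sub>v \<beta>h))) = 0"
      unfolding resid
    proof (rule minimizer_orthogonal)
      show "(\<Gamma>h * Xmat z m c k t) *\<^sub>v \<delta> \<in> carrier_vec q" for t
        using G \<delta> by (rule mult_mat_vec_carrier)
      show "\<exists>\<beta>\<in>carrier_vec ?p. \<exists>\<Gamma>\<in>carrier_mat q (k + 1). \<forall>t\<in>window c k h T.
              err y z m c k h \<beta> \<Gamma> t = err y z m c k h \<beta>h \<Gamma>h t - s \<cdot>\<^sub>v ((\<Gamma>h * Xmat z m c k t) *\<^sub>v \<delta>)"
        for s
        using \<beta>h_dim \<Gamma>h_dim \<delta>
        by (intro bexI[of _ "\<beta>h + s \<cdot>\<^sub>v \<delta>"] bexI[of _ \<Gamma>h] ballI)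
           (auto simp: err_shift_beta[where y = y and h = h, OF y_window_carrier \<Gamma>h_dim \<beta>h_dim \<delta>])
    qed
  qed
  then show ?thesis
    by (simp add: transpose_mult_sandwich[OF \<Gamma>h_dim X W])
qed

end

theorem theorem4:
  fixes y z :: "nat \<Rightarrow> real vec" and q m c k h T :: nat
    and \<beta>h :: "real vec" and \<Gamma>h :: "real mat"
  assumes y_dim: "\<forall>t\<in>{1..T}. y t \<in> carrier_vec q"
    and z_dim: "\<forall>t\<in>{1..T}. z t \<in> carrier_vec m"
    and T_big: "h + c + k < T"
    and \<beta>h_dim: "\<beta>h \<in> carrier_vec (m * (c + 1))"
    and \<Gamma>h_dim: "\<Gamma>h \<in> carrier_mat q (k + 1)"
    and minimizer: "\<forall>\<beta>\<in>carrier_vec (m * (c + 1)). \<forall>\<Gamma>\<in>carrier_mat q (k + 1).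
                      G2 y z q m c k h T \<beta>h \<Gamma>h \<le> G2 y z q m c k h T \<beta> \<Gamma>"
    and Sigma_pos: "det (resid_cov y z q m c k h T \<beta>h \<Gamma>h) > 0"
    and A_inv: "invertible_mat
        ((1 / real (nobs c k h T)) \<cdot>\<^sub>m
          mat_sum (m * (c + 1)) (m * (c + 1))
            (\<lambda>t. transpose_mat (Xmat z m c k t) * transpose_mat \<Gamma>h
                 * minv (resid_cov y z q m c k h T \<beta>h \<Gamma>h) * \<Gamma>h * Xmat z m c k t)
            (window c k h T))"
    and FF_inv: "invertible_mat
        (transpose_mat (Fmat z m c k h T \<beta>h) * Fmat z m c k h T \<beta>h)"
  shows "\<beta>h =
           minv ((1 / real (nobs c k h T)) \<cdot>\<^sub>m
             mat_sum (m * (c + 1)) (m * (c + 1))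
               (\<lambda>t. transpose_mat (Xmat z m c k t) * transpose_mat \<Gamma>h
                    * minv (resid_cov y z q m c k h T \<beta>h \<Gamma>h) * \<Gamma>h * Xmat z m c k t)
               (window c k h T))
           *\<^sub>v ((1 / real (nobs c k h T)) \<cdot>\<^sub>v
                 finsum_vec TYPE(real) (m * (c + 1))
                   (\<lambda>t. transpose_mat (Xmat z m c k t) * transpose_mat \<Gamma>h
                        * minv (resid_cov y z q m c k h T \<beta>h \<Gamma>h) *\<^sub>v y (t + h))
                   (window c k h T))
         \<and> \<Gamma>h = Gls y z q m c k h T \<beta>h"
proof -
  let ?a = "1 / real (nobs c k h T)"
  let ?M = "mat_sum (m * (c + 1)) (m * (c + 1))
              (\<lambda>t. transpose_mat (Xmat z m c k t) * transpose_mat \<Gamma>h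
                   * minv (resid_cov y z q m c k h T \<beta>h \<Gamma>h) * \<Gamma>h * Xmat z m c k t)
              (window c k h T)"
  let ?F = "Fmat z m c k h T \<beta>h"
  have "det (resid_cov y z q m c k h T \<beta>h \<Gamma>h) \<noteq> 0"
    using Sigma_pos by simp
  note normal_equations =
    minimizer_Gamma_normal_equations[OF y_dim T_big \<beta>h_dim \<Gamma>h_dim minimizer this]
    minimizer_beta_normal_equation[OF y_dim T_big \<beta>h_dim \<Gamma>h_dim minimizer this]
  have "\<beta>h = minv (?a \<cdot>\<^sub>m ?M) *\<^sub>v ((?a \<cdot>\<^sub>m ?M) *\<^sub>v \<beta>h)"
    using A_inv \<beta>h_dim by (intro minv_mult_mat_vec_cancel[symmetric]) (auto simp: mat_sum_def)
  also have "(?a \<cdot>\<^sub>m ?M) *\<^sub>v \<beta>h = ?a \<cdot>\<^sub>v (?M *\<^sub>v \<beta>h)"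
    using \<beta>h_dim by (intro smult_mat_mult_mat_vec) (auto simp: mat_sum_def)
  finally have beta_eq: "\<beta>h = minv (?a \<cdot>\<^sub>m ?M) *\<^sub>v (?a \<cdot>\<^sub>v (?M *\<^sub>v \<beta>h))" .
  have "\<Gamma>h = \<Gamma>h * (transpose_mat ?F * ?F) * minv (transpose_mat ?F * ?F)"
    using FF_inv \<Gamma>h_dim by (intro mult_minv_cancel_right[symmetric]) (auto simp: Fmat_def)
  with beta_eq show ?thesis
    unfolding normal_equations Gls_def by simp
qed

end
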